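(* Let $\mathcal E$ be a finite dimensional Hilbert space and let $\psi\in\mathcal C$ satisfy $$0\ge\operatorname{Re}\big[(\psi(z)+I)(\psi(z)-I)^{-1}\big]\ge\operatorname{Re}\big[(z+1)(z-1)^{-1}\big]I\quad\text{for all }z\in\mathbb D.$$ Then there is a unique pair $(A,B)$ with $A$ a self-adjoint operator and $B$ a positive contraction on $\mathcal E$ such that for all $z\in\mathbb D$ $$(\psi(z)+I)(\psi(z)-I)^{-1}=iA+\zeta(z)B,\qquad\text{equivalently}\qquad \psi(z)=(iA+\zeta(z)B+I)(iA+\zeta(z)B-I)^{-1}.$$ In fact $A=\operatorname{Im}\big[(\psi(0)+I)(\psi(0)-I)^{-1}\big]$ and $B=-\operatorname{Re}\big[(\psi(0)+I)(\psi(0)-I)^{-1}\big]$.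
   Context: $\mathbb D$ is the open unit disc, $\zeta(z)=\frac{z+1}{z-1}$, $\operatorname{Re}X=(X+X^* )/2$, $\operatorname{Im}X=(X-X^* )/(2i)$. $\mathcal C=\{\psi\in H^\infty_{\mathbb D}(\mathcal B(\mathcal E)):\sup_z\|\psi(z)\|\le1,\ 1\text{ is not an eigenvalue of }\psi(z)\text{ for any }z\in\mathbb D\}$. *)

theory Defs
  imports "HOL-Analysis.Analysis"
begin

text \<open>Operators on a finite-dimensional Hilbert space E = complex^'n are
  represented by complex matrices complex^'n^'n acting via *v.\<close>

definition cinner :: "complex^'n \<Rightarrow> complex^'n \<Rightarrow> complex" where
  "cinner x y = (\<Sum>i\<in>UNIV. cnj (x$i) * y$i)"

definition cadj :: "complex^'n^'n \<Rightarrow> complex^'n^'n" where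
  "cadj X = (\<chi> i j. cnj (X$j$i))"

definition self_adjoint :: "complex^'n^'n \<Rightarrow> bool" where
  "self_adjoint X \<longleftrightarrow> cadj X = X"

definition positive_op :: "complex^'n^'n \<Rightarrow> bool" where
  "positive_op X \<longleftrightarrow> self_adjoint X \<and> (\<forall>x. 0 \<le> Re (cinner x (X *v x)))"

definition loewner_le :: "complex^'n^'n \<Rightarrow> complex^'n^'n \<Rightarrow> bool" where
  "loewner_le X Y \<longleftrightarrow> positive_op (Y - X)"

definition contraction :: "complex^'n^'n \<Rightarrow> bool" where
  "contraction X \<longleftrightarrow> (\<forall>x. norm (X *v x) \<le> norm x)"

definition op_re :: "complex^'n^'n \<Rightarrow> complex^'n^'n" where
  "op_re X = (\<chi> i j. (X$i$j + cnj (X$j$i)) / 2)"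

definition op_im :: "complex^'n^'n \<Rightarrow> complex^'n^'n" where
  "op_im X = (\<chi> i j. (X$i$j - cnj (X$j$i)) / (2 * \<i>))"

definition zeta :: "complex \<Rightarrow> complex" where
  "zeta z = (z + 1) / (z - 1)"

definition class_C :: "(complex \<Rightarrow> complex^'n^'n) \<Rightarrow> bool" where
  "class_C \<psi> \<longleftrightarrow>
     (\<forall>i j. (\<lambda>z. \<psi> z $ i $ j) holomorphic_on ball 0 1) \<and>
     (\<forall>z\<in>ball 0 1. contraction (\<psi> z)) \<and>
     (\<forall>z\<in>ball 0 1. \<not> (\<exists>x. x \<noteq> 0 \<and> \<psi> z *v x = x))"

definition cayley :: "complex^'n^'n \<Rightarrow> complex^'n^'n" where
  "cayley X = (X + mat 1) ** matrix_inv (X - mat 1)"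

end

theory Submission
  imports Defs "HOL-Complex_Analysis.Complex_Analysis"
begin

text \<open>
  For a vector x the function q(z) = <x, cayley (\<psi> z) x> is holomorphic on the disc with
  Re \<zeta>(z) |x|^2 \<le> Re q(z) \<le> 0. The Cayley map s \<mapsto> (s - \<i>)/(s + \<i>) of the upper
  half-plane onto the disc turns \<zeta> into s \<mapsto> \<i> s, so h = -\<i> q is holomorphic there with
  0 \<le> Im h(s) \<le> |x|^2 Im s. By the Schwarz-Pick lemma h' is bounded, so h is Lipschitz; its
  continuous extension is real on the real axis, and Schwarz reflection yields an entire function
  of linear growth, which is affine by Liouville's theorem. Hence q(z) = \<i> a + b \<zeta>(z) with a, b
  real, and polarization turns these scalar identities into cayley (\<psi> z) = \<i> A + \<zeta>(z) B.
  Evaluating at z = 0, where \<zeta>(0) = -1, identifies A and B, and the hypothesis at 0 says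
  0 \<le> B \<le> I, so B is a contraction.
\<close>

section \<open>Holomorphic functions on the upper half-plane\<close>

lemma eq_0_if_abs_le_mult_all_pos:
  fixes a C :: real
  assumes "\<And>y. 0 < y \<Longrightarrow> \<bar>a\<bar> \<le> C * y"
  shows "a = 0"
proof (rule ccontr)
  assume "a \<noteq> 0"
  define y where "y = \<bar>a\<bar> / (2 * (\<bar>C\<bar> + 1))"
  have y: "0 < y" using \<open>a \<noteq> 0\<close> by (simp add: y_def)
  have "C * y \<le> \<bar>C\<bar> * y" using y by (simp add: mult_right_mono)
  also have "\<dots> < (\<bar>C\<bar> + 1) * y" using y by simp
  also have "\<dots> = \<bar>a\<bar> / 2" by (simp add: y_def field_simps)
  finally show False using assms[OF y] \<open>a \<noteq> 0\<close> by simp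
qed

lemma closure_halfspace_Im_gt: "closure {s. b < Im s} = {s. b \<le> Im s}"
  using closure_halfspace_gt[of \<i> b] by (simp add: inner_complex_def)

lemma norm_divide_diff_cnj_lt_1:
  fixes w c :: complex
  assumes "0 < Im w" "0 < Im c"
  shows "norm ((w - c) / (w - cnj c)) < 1"
proof -
  have "(norm (w - c))\<^sup>2 < (norm (w - cnj c))\<^sup>2"
    unfolding cmod_power2 using assms by (simp add: power2_eq_square algebra_simps)
  then have "norm (w - c) < norm (w - cnj c)"
    by (meson norm_ge_zero power_less_imp_less_base)
  then show ?thesis
    by (simp add: norm_divide divide_less_eq)
qed

lemma Schwarz_Pick_upper_half_plane:
  assumes hol: "f holomorphic_on ball 0 1"
    and pos: "\<And>u. norm u < 1 \<Longrightarrow> 0 < Im (f u)"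
  shows "norm (deriv f 0) \<le> 2 * Im (f 0)"
proof -
  define c where "c = f 0"
  define g where "g u = (f u - c) / (f u - cnj c)" for u
  have c: "0 < Im c" "c - cnj c = 2 * \<i> * Im c"
    using pos[of 0] by (simp_all add: c_def complex_eq_iff)
  have den: "f u - cnj c \<noteq> 0" if "norm u < 1" for u
    using pos[OF that] c by (auto simp: complex_eq_iff)
  have "g holomorphic_on ball 0 1"
    unfolding g_def using hol den by (intro holomorphic_intros) auto
  moreover have "norm (g u) < 1" if "norm u < 1" for u
    unfolding g_def using norm_divide_diff_cnj_lt_1[OF pos[OF that] c(1)] .
  ultimately have "norm (deriv g 0) \<le> 1"
    using Schwarz_Lemma(2)[of g 0] by (simp add: g_def c_def)
  moreover have "(g has_field_derivative deriv f 0 / (c - cnj c)) (at 0)"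
  proof -
    have "(f has_field_derivative deriv f 0) (at 0)"
      using hol by (intro holomorphic_derivI[of _ "ball 0 1"]) auto
    from DERIV_divide[OF DERIV_diff[OF this DERIV_const[of c]] DERIV_diff[OF this DERIV_const[of "cnj c"]]]
    show ?thesis
      using den[of 0] c by (simp add: g_def[abs_def] c_def power2_eq_square)
  qed
  ultimately have "norm (deriv f 0) \<le> norm (c - cnj c)"
    using c by (simp add: DERIV_imp_deriv norm_divide divide_le_eq)
  then show ?thesis
    using c by (simp add: norm_mult c_def)
qed

lemma norm_deriv_le_if_Im_bounded:
  fixes h :: "complex \<Rightarrow> complex"
  assumes hol: "h holomorphic_on {s. 0 < Im s}"
    and bd: "\<And>s. 0 < Im s \<Longrightarrow> 0 \<le> Im (h s) \<and> Im (h s) \<le> K * Im s"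
    and s0: "0 < Im s0"
  shows "norm (deriv h s0) \<le> 2 * (K + 1)"
proof -
  define y where "y = Im s0"
  \<comment> \<open>The disc of radius y about s0 lies in the half-plane; the shift by \<i> y makes Im f positive.\<close>
  define f where "f u = h (s0 + of_real y * u) + \<i> * of_real y" for u
  have in_half_plane: "0 < Im (s0 + of_real y * u)" if "norm u < 1" for u
  proof -
    have "y * \<bar>Im u\<bar> < y"
      using abs_Im_le_cmod[of u] that s0 by (simp add: y_def)
    moreover have "- (y * \<bar>Im u\<bar>) \<le> y * Im u"
      using mult_left_mono[of "- \<bar>Im u\<bar>" "Im u" y] s0 by (simp add: y_def)
    ultimately show ?thesis by (simp add: y_def)
  qed
  have "(\<lambda>u. h (s0 + of_real y * u)) holomorphic_on ball 0 1"
    by (rule holomorphic_on_compose_gen[unfolded o_def, OF _ hol])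
       (use in_half_plane in \<open>auto intro!: holomorphic_intros\<close>)
  then have hol_f: "f holomorphic_on ball 0 1"
    unfolding f_def by (intro holomorphic_intros)
  have "norm (deriv f 0) \<le> 2 * Im (f 0)"
  proof (rule Schwarz_Pick_upper_half_plane[OF hol_f])
    show "0 < Im (f u)" if "norm u < 1" for u
      using bd[OF in_half_plane[OF that]] s0 by (simp add: f_def y_def)
  qed
  moreover have "deriv f 0 = deriv h s0 * of_real y"
  proof (rule DERIV_imp_deriv)
    have "(h has_field_derivative deriv h s0) (at s0)"
      using hol s0 by (auto intro!: holomorphic_derivI simp: open_halfspace_Im_gt)
    then show "(f has_field_derivative deriv h s0 * of_real y) (at 0)"
      unfolding f_def[abs_def]
      by (auto intro!: derivative_eq_intros DERIV_chain2[where f = h])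
  qed
  ultimately have "norm (deriv h s0) * y \<le> 2 * (Im (h s0) + y)"
    using s0 by (simp add: f_def y_def norm_mult)
  also have "\<dots> \<le> 2 * (K + 1) * y"
    using bd[OF s0] by (simp add: y_def algebra_simps)
  finally show ?thesis
    using s0 by (simp add: y_def)
qed

lemma lipschitz_on_if_Im_bounded:
  fixes h :: "complex \<Rightarrow> complex"
  assumes hol: "h holomorphic_on {s. 0 < Im s}"
    and bd: "\<And>s. 0 < Im s \<Longrightarrow> 0 \<le> Im (h s) \<and> Im (h s) \<le> K * Im s"
  shows "(2 * (K + 1))-lipschitz_on {s. 0 < Im s} h"
proof (rule lipschitz_onI)
  fix x y assume "x \<in> {s. 0 < Im s}" "y \<in> {s. 0 < Im s}"
  then have "norm (h x - h y) \<le> 2 * (K + 1) * norm (x - y)"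
    using hol convex_halfspace_Im_gt[of 0] norm_deriv_le_if_Im_bounded[OF hol bd]
    by (intro field_differentiable_bound[of "{s. 0 < Im s}"])
       (auto intro!: holomorphic_derivI simp: open_halfspace_Im_gt)
  then show "dist (h x) (h y) \<le> 2 * (K + 1) * dist x y"
    by (simp add: dist_norm)
next
  show "0 \<le> 2 * (K + 1)"
    using bd[of \<i>] by simp \<comment> \<open>the hypothesis at s = \<i> forces K \<ge> 0\<close>
qed

lemma Im_eq_0_if_lipschitz_Im_bounded:
  fixes g :: "complex \<Rightarrow> complex"
  assumes lip: "L-lipschitz_on {s. 0 \<le> Im s} g"
    and Im_bd: "\<And>s. 0 < Im s \<Longrightarrow> \<bar>Im (g s)\<bar> \<le> K * Im s"
    and t: "Im t = 0"
  shows "Im (g t) = 0"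
proof (rule eq_0_if_abs_le_mult_all_pos[where C = "L + K"])
  fix y :: real assume y: "0 < y"
  define s where "s = t + \<i> * of_real y"
  have s: "0 < Im s" "dist t s = y"
    using t y by (simp_all add: s_def dist_norm norm_mult)
  have "\<bar>Im (g t) - Im (g s)\<bar> \<le> L * y"
    using abs_Im_le_cmod[of "g t - g s"] lipschitz_onD[OF lip, of t s] s t by (simp add: dist_norm)
  then show "\<bar>Im (g t)\<bar> \<le> (L + K) * y"
    using Im_bd[OF s(1)] t by (simp add: s_def algebra_simps abs_le_iff)
qed

lemma affine_if_lipschitz_real_on_axis:
  fixes g :: "complex \<Rightarrow> complex"
  assumes hol: "g holomorphic_on {s. 0 < Im s}"
    and lip: "L-lipschitz_on {s. 0 \<le> Im s} g"
    and real: "\<And>t. Im t = 0 \<Longrightarrow> Im (g t) = 0"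
  shows "\<exists>\<alpha> \<beta>. \<forall>s. 0 \<le> Im s \<longrightarrow> g s = \<alpha> + \<beta> * s"
proof -
  define R where "R z = (if 0 \<le> Im z then g z else cnj (g (cnj z)))" for z
  have "R holomorphic_on UNIV"
    unfolding R_def
  proof (rule Schwarz_reflection)
    show "g holomorphic_on UNIV \<inter> {z. 0 < Im z}"
      using hol by simp
    show "continuous_on (UNIV \<inter> {z. 0 \<le> Im z}) g"
      using lipschitz_on_continuous_on[OF lip] by simp
    show "g z \<in> \<real>" if "z \<in> \<real>" for z
      using real[of z] that by (simp add: complex_is_Real_iff)
  qed auto
  moreover have "norm (R z) \<le> (norm (g 0) + L) * norm z ^ 1" if "1 \<le> norm z" for z
  proof -
    obtain w where w: "0 \<le> Im w" "norm w = norm z" "norm (R z) = norm (g w)"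
    proof (cases "0 \<le> Im z")
      case True
      then show ?thesis using that[of z] by (simp add: R_def)
    next
      case False
      then show ?thesis using that[of "cnj z"] by (simp add: R_def)
    qed
    have "norm (g w) \<le> norm (g 0) + L * norm w"
      using norm_triangle_sub[of "g w" "g 0"] lipschitz_onD[OF lip, of w 0] w(1)
      by (simp add: dist_norm)
    also have "\<dots> \<le> (norm (g 0) + L) * norm z"
      using w(2) that mult_left_mono[OF that, of "norm (g 0)"] by (simp add: algebra_simps)
    finally show ?thesis
      using w(3) by simp
  qed
  ultimately have "R s = R 0 + deriv R 0 * s" for s
    using Liouville_polynomial[of R 1 "norm (g 0) + L" 1 s] by simp
  then show ?thesis
    by (metis R_def)
qed

lemma affine_if_lipschitz_upper_half_plane:
  fixes h :: "complex \<Rightarrow> complex"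
  assumes hol: "h holomorphic_on {s. 0 < Im s}"
    and lip: "L-lipschitz_on {s. 0 < Im s} h"
    and Im_bd: "\<And>s. 0 < Im s \<Longrightarrow> \<bar>Im (h s)\<bar> \<le> K * Im s"
  shows "\<exists>\<alpha> \<beta>. \<forall>s. 0 < Im s \<longrightarrow> h s = \<alpha> + \<beta> * s"
proof -
  obtain g where g: "L-lipschitz_on {s. 0 \<le> Im s} g" and gh: "\<And>s. 0 < Im s \<Longrightarrow> g s = h s"
    using lipschitz_extend_closure[OF lip] by (auto simp: closure_halfspace_Im_gt)
  have "g holomorphic_on {s. 0 < Im s}"
    using hol gh by (auto intro: holomorphic_transform)
  moreover have "Im (g t) = 0" if "Im t = 0" for t
    using Im_eq_0_if_lipschitz_Im_bounded[OF g _ that, of K] Im_bd gh by simp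
  ultimately obtain \<alpha> \<beta> where "\<forall>s. 0 \<le> Im s \<longrightarrow> g s = \<alpha> + \<beta> * s"
    using affine_if_lipschitz_real_on_axis[OF _ g] by blast
  then show ?thesis
    using gh by (metis less_eq_real_def)
qed

lemma real_coeffs_if_Im_affine_bounded:
  fixes \<alpha> \<beta> :: complex
  assumes bd: "\<And>s. 0 < Im s \<Longrightarrow> \<bar>Im (\<alpha> + \<beta> * s)\<bar> \<le> K * Im s"
  shows "\<alpha> \<in> \<real>" "\<beta> \<in> \<real>"
proof -
  show Im_\<beta>: "\<beta> \<in> \<real>"
  proof (rule ccontr)
    assume "\<beta> \<notin> \<real>"
    define t where "t = (K + 1 + \<bar>Im \<alpha>\<bar> + \<bar>Re \<beta>\<bar>) / Im \<beta>"
    have "Im \<beta> * t = K + 1 + \<bar>Im \<alpha>\<bar> + \<bar>Re \<beta>\<bar>"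
      using \<open>\<beta> \<notin> \<real>\<close> by (simp add: t_def complex_is_Real_iff)
    then have "Im (\<alpha> + \<beta> * Complex t 1) = Im \<alpha> + Re \<beta> + K + 1 + \<bar>Im \<alpha>\<bar> + \<bar>Re \<beta>\<bar>"
      by (simp add: mult.commute)
    moreover have "\<bar>Im (\<alpha> + \<beta> * Complex t 1)\<bar> \<le> K"
      using bd[of "Complex t 1"] by simp
    ultimately show False
      by arith
  qed
  show "\<alpha> \<in> \<real>"
  proof -
    have "Im \<alpha> = 0"
    proof (rule eq_0_if_abs_le_mult_all_pos[where C = "K + \<bar>Re \<beta>\<bar>"])
      fix y :: real assume y: "0 < y"
      have "\<bar>Im \<alpha> + Re \<beta> * y\<bar> \<le> K * y"
        using bd[of "Complex 0 y"] y Im_\<beta> by (simp add: complex_is_Real_iff)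
      moreover have "\<bar>Re \<beta> * y\<bar> = \<bar>Re \<beta>\<bar> * y"
        using y by (simp add: abs_mult)
      ultimately show "\<bar>Im \<alpha>\<bar> \<le> (K + \<bar>Re \<beta>\<bar>) * y"
        by (simp add: distrib_right)
    qed
    then show ?thesis by (simp add: complex_is_Real_iff)
  qed
qed

theorem affine_if_Im_bounded_upper_half_plane:
  fixes h :: "complex \<Rightarrow> complex"
  assumes hol: "h holomorphic_on {s. 0 < Im s}"
    and bd: "\<And>s. 0 < Im s \<Longrightarrow> 0 \<le> Im (h s) \<and> Im (h s) \<le> K * Im s"
  shows "\<exists>a b :: real. \<forall>s. 0 < Im s \<longrightarrow> h s = of_real a + of_real b * s"
proof -
  have Im_bd: "\<bar>Im (h s)\<bar> \<le> K * Im s" if "0 < Im s" for s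
    using bd[OF that] by simp
  obtain \<alpha> \<beta> where h: "\<And>s. 0 < Im s \<Longrightarrow> h s = \<alpha> + \<beta> * s"
    using affine_if_lipschitz_upper_half_plane[OF hol lipschitz_on_if_Im_bounded[OF hol bd] Im_bd]
    by blast
  have "\<alpha> \<in> \<real>" "\<beta> \<in> \<real>"
    using real_coeffs_if_Im_affine_bounded[of \<alpha> \<beta> K] Im_bd h by simp_all
  then show ?thesis
    using h by (metis Reals_cases)
qed

lemma zeta_0 [simp]: "zeta 0 = -1"
  by (simp add: zeta_def)

lemma Re_zeta_neg:
  assumes "norm z < 1"
  shows "Re (zeta z) < 0"
proof -
  have "(Re z)\<^sup>2 + (Im z)\<^sup>2 < 1"
    using assms by (simp add: cmod_def)
  moreover have "0 < (Re z - 1)\<^sup>2 + (Im z)\<^sup>2"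
    using abs_Re_le_cmod[of z] assms by (simp add: add_pos_nonneg)
  moreover have "Re (zeta z) = ((Re z)\<^sup>2 + (Im z)\<^sup>2 - 1) / ((Re z - 1)\<^sup>2 + (Im z)\<^sup>2)"
    by (simp add: zeta_def Re_divide complex_norm_square power2_eq_square algebra_simps)
  ultimately show ?thesis
    by (simp add: divide_neg_pos)
qed

lemma Cayley_upper_half_plane:
  assumes "0 < Im s"
  shows "(s - \<i>) / (s + \<i>) \<in> ball 0 1" "zeta ((s - \<i>) / (s + \<i>)) = \<i> * s"
proof -
  show "(s - \<i>) / (s + \<i>) \<in> ball 0 1"
    using norm_divide_diff_cnj_lt_1[OF assms, of \<i>] by simp
  have nz: "s + \<i> \<noteq> 0"
    using assms by (auto simp: complex_eq_iff)
  then have "(s - \<i>) / (s + \<i>) + 1 = 2 * s / (s + \<i>)" "(s - \<i>) / (s + \<i>) - 1 = - 2 * \<i> / (s + \<i>)"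
    by (simp_all add: field_simps)
  then have "zeta ((s - \<i>) / (s + \<i>)) = (2 * s) / (- 2 * \<i>)"
    using nz by (simp add: zeta_def)
  then show "zeta ((s - \<i>) / (s + \<i>)) = \<i> * s"
    by (simp add: field_simps)
qed

lemma Cayley_zeta:
  assumes "z \<noteq> 1"
  shows "(- \<i> * zeta z - \<i>) / (- \<i> * zeta z + \<i>) = z"
  using assms by (simp add: zeta_def field_simps)

theorem affine_in_zeta_if_Re_bounded:
  fixes q :: "complex \<Rightarrow> complex"
  assumes hol: "q holomorphic_on ball 0 1"
    and bd: "\<And>z. z \<in> ball 0 1 \<Longrightarrow> Re (zeta z) * K \<le> Re (q z) \<and> Re (q z) \<le> 0"
  shows "\<exists>a b :: real. \<forall>z\<in>ball 0 1. q z = \<i> * of_real a + of_real b * zeta z"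
proof -
  define h where "h s = - \<i> * q ((s - \<i>) / (s + \<i>))" for s
  have "h holomorphic_on {s. 0 < Im s}"
    unfolding h_def
    by (intro holomorphic_intros holomorphic_on_compose_gen[OF _ hol, unfolded o_def])
       (auto simp: complex_eq_iff dest: Cayley_upper_half_plane(1))
  moreover have "0 \<le> Im (h s) \<and> Im (h s) \<le> K * Im s" if "0 < Im s" for s
    using bd[OF Cayley_upper_half_plane(1)[OF that]] Cayley_upper_half_plane(2)[OF that]
    by (simp add: h_def mult.commute)
  ultimately obtain a b :: real where ab: "\<And>s. 0 < Im s \<Longrightarrow> h s = of_real a + of_real b * s"
    using affine_if_Im_bounded_upper_half_plane by blast
  have "q z = \<i> * of_real a + of_real b * zeta z" if z: "z \<in> ball 0 1" for z
  proof -
    have s: "0 < Im (- \<i> * zeta z)"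
      using Re_zeta_neg[of z] z by simp
    have "z \<noteq> 1"
      using z by auto
    then have "q z = \<i> * h (- \<i> * zeta z)"
      using Cayley_zeta by (simp add: h_def)
    also have "\<dots> = \<i> * (of_real a + of_real b * (- \<i> * zeta z))"
      by (simp only: ab[OF s])
    also have "\<dots> = \<i> * of_real a + of_real b * zeta z"
      by (simp add: algebra_simps)
    finally show ?thesis .
  qed
  then show ?thesis by blast
qed

section \<open>Matrices and the Cayley transform\<close>

lemma mat_matrix_vector_mult: "mat c *v x = c *s (x :: 'a::comm_semiring_1^'n)"
  by (simp add: mat_def matrix_vector_mult_def vec_eq_iff if_distrib if_distribR cong: if_cong)

lemma mat_matrix_mult: "mat c ** X = (\<chi> i j. c * X$i$j :: 'a::comm_semiring_1^'n^'m)"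
  by (simp add: mat_def matrix_matrix_mult_def vec_eq_iff if_distrib if_distribR cong: if_cong)

lemma mat_mult_mat: "mat a ** mat b = (mat (a * b) :: 'a::comm_semiring_1^'n^'n)"
  by (simp add: mat_matrix_mult) (simp add: mat_def vec_eq_iff)

lemma matrix_add_rdistrib: "(A + B) ** C = A ** C + B ** (C :: 'a::semiring_1^'n^'m)"
  by (vector matrix_matrix_mult_def sum.distrib[symmetric] field_simps)

lemma matrix_diff_rdistrib: "(A - B) ** C = A ** C - B ** (C :: 'a::ring_1^'n^'m)"
  by (vector matrix_matrix_mult_def sum_subtractf[symmetric] field_simps)

lemma matrix_vector_mult_uminus_left: "(- A) *v x = - (A *v (x :: 'a::ring_1^'n))"
  by (simp add: matrix_vector_mult_def vec_eq_iff sum_negf)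

lemma matrix_inv_right: "invertible A \<Longrightarrow> A ** matrix_inv A = mat 1"
  and matrix_inv_left: "invertible A \<Longrightarrow> matrix_inv A ** A = mat 1"
  by (metis (mono_tags, lifting) invertible_def matrix_inv_def someI_ex)+

lemma matrix_inv_unique:
  fixes A :: "'a::semiring_1^'n^'n"
  assumes "A ** B = mat 1" "B ** A = mat 1"
  shows "matrix_inv A = B"
proof -
  have "invertible A"
    using assms unfolding invertible_def by blast
  then have "matrix_inv A = (B ** A) ** matrix_inv A"
    using assms by simp
  also have "\<dots> = B"
    using matrix_inv_right[OF \<open>invertible A\<close>] by (simp add: matrix_mul_assoc[symmetric])
  finally show ?thesis .
qed

lemma invertible_diff_mat_1:
  fixes P :: "'a::field^'n^'n"
  assumes "\<not> (\<exists>x. x \<noteq> 0 \<and> P *v x = x)"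
  shows "invertible (P - mat 1)"
  unfolding invertible_left_inverse matrix_left_invertible_ker
  using assms by (auto simp: matrix_vector_mult_diff_rdistrib)

lemma cayley_cayley:
  fixes P :: "complex^'n^'n"
  assumes "invertible (P - mat 1)"
  shows "cayley (cayley P) = P"
proof -
  define N where "N = P - mat 1"
  have N: "N ** matrix_inv N = mat 1" "matrix_inv N ** N = mat 1"
    using assms by (simp_all add: N_def matrix_inv_right matrix_inv_left)
  have two: "mat 1 + mat 1 = (mat 2 :: complex^'n^'n)"
    by (simp add: mat_def vec_eq_iff)
  have C: "cayley P = (P + mat 1) ** matrix_inv N"
    by (simp add: cayley_def N_def)
  have "cayley P - mat 1 = (P + mat 1 - N) ** matrix_inv N"
    by (simp add: C matrix_diff_rdistrib N)
  also have "P + mat 1 - N = mat 2"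
    unfolding N_def two[symmetric] by simp
  finally have minus: "cayley P - mat 1 = mat 2 ** matrix_inv N" .
  have "cayley P + mat 1 = (P + mat 1 + N) ** matrix_inv N"
    by (simp add: C matrix_add_rdistrib N)
  also have "P + mat 1 + N = P ** mat 2"
    unfolding N_def two[symmetric] matrix_add_ldistrib by simp
  finally have plus: "cayley P + mat 1 = P ** mat 2 ** matrix_inv N" .
  have cancel: "matrix_inv N ** (N ** X) = X" "mat (1/2) ** (mat 2 ** X) = X" for X
    by (simp_all add: matrix_mul_assoc N mat_mult_mat)
  have "matrix_inv (cayley P - mat 1) = N ** mat (1/2)"
    unfolding minus
    by (rule matrix_inv_unique)
       (simp_all add: matrix_mul_assoc[symmetric] cancel mat_mult_mat N)
  then have "cayley (cayley P) = (P ** mat 2 ** matrix_inv N) ** (N ** mat (1/2))"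
    by (simp only: cayley_def[of "cayley P"] plus)
  then show ?thesis
    by (simp add: matrix_mul_assoc[symmetric] cancel mat_mult_mat)
qed

lemma holomorphic_on_det:
  fixes M :: "complex \<Rightarrow> complex^'n^'n"
  assumes "\<And>i j. (\<lambda>z. M z $ i $ j) holomorphic_on S"
  shows "(\<lambda>z. det (M z)) holomorphic_on S"
  unfolding det_def
  by (intro holomorphic_on_sum holomorphic_on_mult holomorphic_on_prod holomorphic_on_const assms)

lemma matrix_inv_Cramer:
  fixes N :: "'a::field^'n^'n"
  assumes "invertible N"
  shows "matrix_inv N $ k $ j = det (\<chi> a b. if b = k then axis j 1 $ a else N $ a $ b) / det N"
proof -
  have "N *v (matrix_inv N *v axis j 1) = axis j 1"
    by (simp add: matrix_vector_mul_assoc matrix_inv_right[OF assms])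
  moreover have "(matrix_inv N *v axis j 1) $ k = matrix_inv N $ k $ j"
    by (simp add: matrix_vector_mult_def axis_def if_distrib if_distribR cong: if_cong)
  ultimately show ?thesis
    using cramer[of N] assms invertible_det_nz by force
qed

lemma holomorphic_on_matrix_inv:
  fixes N :: "complex \<Rightarrow> complex^'n^'n"
  assumes hol: "\<And>i j. (\<lambda>z. N z $ i $ j) holomorphic_on S"
    and inv: "\<And>z. z \<in> S \<Longrightarrow> invertible (N z)"
  shows "(\<lambda>z. matrix_inv (N z) $ k $ j) holomorphic_on S"
proof -
  have "(\<lambda>z. (\<chi> a b. if b = k then axis j 1 $ a else N z $ a $ b) $ a $ b) holomorphic_on S" for a b
    by (cases "b = k") (simp_all add: hol)
  then have "(\<lambda>z. det (\<chi> a b. if b = k then axis j 1 $ a else N z $ a $ b) / det (N z)) holomorphic_on S"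
    using inv invertible_det_nz by (intro holomorphic_on_divide holomorphic_on_det) (auto simp: hol)
  then show ?thesis
    by (rule holomorphic_transform) (simp add: matrix_inv_Cramer[OF inv])
qed

lemma holomorphic_on_matrix_mult:
  fixes M N :: "complex \<Rightarrow> complex^'n^'n"
  assumes "\<And>i j. (\<lambda>z. M z $ i $ j) holomorphic_on S" "\<And>i j. (\<lambda>z. N z $ i $ j) holomorphic_on S"
  shows "(\<lambda>z. (M z ** N z) $ i $ j) holomorphic_on S"
  unfolding matrix_matrix_mult_def
  by (simp, intro holomorphic_on_sum holomorphic_on_mult assms)

lemma holomorphic_on_cayley:
  fixes P :: "complex \<Rightarrow> complex^'n^'n"
  assumes hol: "\<And>i j. (\<lambda>z. P z $ i $ j) holomorphic_on S"
    and inv: "\<And>z. z \<in> S \<Longrightarrow> invertible (P z - mat 1)"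
  shows "(\<lambda>z. cayley (P z) $ i $ j) holomorphic_on S"
  unfolding cayley_def
  using hol inv
  by (intro holomorphic_on_matrix_mult holomorphic_on_matrix_inv) (auto intro!: holomorphic_intros)

section \<open>Quadratic forms\<close>

lemma cinner_add_left: "cinner (u + v) w = cinner u w + cinner v w"
  by (simp add: cinner_def sum.distrib distrib_right)

lemma cinner_add_right: "cinner w (u + v) = cinner w u + cinner w v"
  by (simp add: cinner_def sum.distrib distrib_left)

lemma cinner_diff_right: "cinner w (u - v) = cinner w u - cinner w v"
  by (simp add: cinner_def sum_subtractf right_diff_distrib)

lemma cinner_minus_right: "cinner w (- v) = - cinner w v"
  by (simp add: cinner_def sum_negf)

lemma cinner_scale_left: "cinner (c *s u) w = cnj c * cinner u w"
  by (simp add: cinner_def sum_distrib_left mult_ac)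

lemma cinner_scale_right: "cinner w (c *s u) = c * cinner w u"
  by (simp add: cinner_def sum_distrib_left mult_ac)

lemma cinner_commute: "cinner u w = cnj (cinner w u)"
  by (simp add: cinner_def mult.commute)

lemma Re_cinner_self: "Re (cinner x x) = (norm x)\<^sup>2"
proof -
  have "Re (cnj a * a) = (cmod a)\<^sup>2" for a
    unfolding cmod_power2 by (simp add: power2_eq_square)
  then have "Re (cinner x x) = (\<Sum>i\<in>UNIV. (cmod (x$i))\<^sup>2)"
    by (simp add: cinner_def Re_sum)
  also have "\<dots> = (norm x)\<^sup>2"
    by (simp add: norm_vec_def L2_set_def sum_nonneg)
  finally show ?thesis .
qed

lemma cinner_cadj: "cinner x (cadj X *v y) = cnj (cinner y (X *v x))"
  unfolding cinner_def cadj_def matrix_vector_mult_def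
  by (simp add: sum_distrib_left mult_ac) (rule sum.swap)

lemma cinner_self_adjoint: "self_adjoint X \<Longrightarrow> cinner x (X *v y) = cinner (X *v x) y"
  by (metis cinner_cadj cinner_commute self_adjoint_def)

lemma self_adjoint_op_im: "self_adjoint (op_im X)"
  by (simp add: self_adjoint_def op_im_def cadj_def vec_eq_iff field_simps)

lemma cinner_op_re: "cinner x (op_re X *v x) = of_real (Re (cinner x (X *v x)))"
proof -
  have "op_re X = mat (1/2) ** (X + cadj X)"
    by (simp add: op_re_def cadj_def mat_matrix_mult vec_eq_iff)
  then show ?thesis
    by (simp add: matrix_vector_mul_assoc[symmetric] mat_matrix_vector_mult cinner_scale_right
        matrix_vector_mult_add_rdistrib cinner_add_right cinner_cadj)
       (simp add: complex_eq_iff)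
qed

lemma cinner_op_im: "cinner x (op_im X *v x) = of_real (Im (cinner x (X *v x)))"
proof -
  have "op_im X = mat (1 / (2 * \<i>)) ** (X - cadj X)"
    by (simp add: op_im_def cadj_def mat_matrix_mult vec_eq_iff)
  then show ?thesis
    by (simp add: matrix_vector_mul_assoc[symmetric] mat_matrix_vector_mult cinner_scale_right
        matrix_vector_mult_diff_rdistrib cinner_diff_right cinner_cadj complex_diff_cnj field_simps)
qed

lemma matrix_eq_0_if_quadratic_form_eq_0:
  fixes M :: "complex^'n^'n"
  assumes q: "\<And>x. cinner x (M *v x) = 0"
  shows "M = 0"
proof -
  have "cinner u (M *v v) = 0" for u v
  proof -
    have "cinner u (M *v v) + cinner v (M *v u) = 0"
      using q[of "u + v"] q[of u] q[of v]
      by (simp add: matrix_vector_right_distrib cinner_add_left cinner_add_right add.commute)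
    moreover have "cinner u (M *v (\<i> *s v)) + cinner (\<i> *s v) (M *v u) = 0"
      using q[of "u + \<i> *s v"] q[of u] q[of "\<i> *s v"]
      by (simp add: matrix_vector_right_distrib cinner_add_left cinner_add_right add.commute)
    then have "cinner u (M *v v) = cinner v (M *v u)"
      by (simp add: vector_scalar_commute cinner_scale_left cinner_scale_right)
    ultimately show ?thesis by simp
  qed
  from this[of "axis i 1" "axis j 1" for i j] show ?thesis
    by (simp add: vec_eq_iff cinner_def matrix_vector_mult_def axis_def if_distrib if_distribR
        cong: if_cong)
qed

lemma contraction_if_positive_op_loewner_le_1:
  fixes B :: "complex^'n^'n"
  assumes pB: "positive_op B" and pC: "loewner_le B (mat 1)"
  shows "contraction B"
  unfolding contraction_def
proof
  fix x :: "complex^'n"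
  define C where "C = mat 1 - B"
  define u where "u = B *v x"
  define w where "w = C *v x"
  have pC: "positive_op C"
    using pC by (simp add: loewner_le_def C_def)
  have x: "x = u + w"
    by (simp add: u_def w_def C_def matrix_vector_mult_diff_rdistrib)
  have Bw: "B *v w = C *v u"
    by (simp add: u_def w_def C_def matrix_vector_mult_diff_rdistrib matrix_vector_mult_diff_distrib)
  have "cinner w u = cinner w (B *v u) + cinner w (B *v w)"
    by (metis u_def x matrix_vector_right_distrib cinner_add_right)
  also have "cinner w (B *v u) = cinner (C *v u) u"
    using pB by (simp add: positive_op_def cinner_self_adjoint Bw)
  finally have "Re (cinner w u) = Re (cinner u (C *v u)) + Re (cinner w (B *v w))"
    by (simp add: cinner_commute[of "C *v u" u])
  then have "0 \<le> Re (cinner w u)"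
    using pB pC by (simp add: positive_op_def add_nonneg_nonneg)
  moreover have "Re (cinner x x) = Re (cinner u u) + 2 * Re (cinner w u) + Re (cinner w w)"
    by (simp add: x cinner_add_left cinner_add_right cinner_commute[of u w])
  ultimately have "(norm u)\<^sup>2 \<le> (norm x)\<^sup>2"
    by (simp add: Re_cinner_self)
  then show "norm (B *v x) \<le> norm x"
    using power2_le_imp_le by (simp add: u_def)
qed

lemma Re_quadratic_form_bounds:
  assumes "loewner_le (op_re X) 0" "loewner_le (mat (of_real r)) (op_re X)"
  shows "r * Re (cinner x x) \<le> Re (cinner x (X *v x))" "Re (cinner x (X *v x)) \<le> 0"
proof -
  have "0 \<le> Re (cinner x ((op_re X - mat (of_real r)) *v x))"
    using assms(2) by (simp add: loewner_le_def positive_op_def)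
  then show "r * Re (cinner x x) \<le> Re (cinner x (X *v x))"
    by (simp add: matrix_vector_mult_diff_rdistrib cinner_diff_right cinner_op_re
        mat_matrix_vector_mult cinner_scale_right)
  have "0 \<le> Re (cinner x ((- op_re X) *v x))"
    using assms(1) by (simp add: loewner_le_def positive_op_def)
  then show "Re (cinner x (X *v x)) \<le> 0"
    by (simp add: matrix_vector_mult_uminus_left cinner_minus_right cinner_op_re)
qed

section \<open>Operator-valued functions\<close>

lemma affine_in_zeta_if_op_re_bounded:
  fixes F :: "complex \<Rightarrow> complex^'n^'n"
  assumes hol: "\<And>i j. (\<lambda>z. F z $ i $ j) holomorphic_on ball 0 1"
    and bd: "\<And>z. z \<in> ball 0 1 \<Longrightarrow>
      loewner_le (op_re (F z)) 0 \<and> loewner_le (mat (of_real (Re (zeta z)))) (op_re (F z))"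
    and z: "z \<in> ball 0 1"
  shows "F z = mat \<i> ** op_im (F 0) + mat (zeta z) ** (- op_re (F 0))"
proof -
  have "F z - (mat \<i> ** op_im (F 0) + mat (zeta z) ** (- op_re (F 0))) = 0"
  proof (rule matrix_eq_0_if_quadratic_form_eq_0)
    fix x :: "complex^'n"
    define q where "q w = cinner x (F w *v x)" for w
    have "q holomorphic_on ball 0 1"
      unfolding q_def cinner_def matrix_vector_mult_def
      by (simp, intro holomorphic_on_sum holomorphic_on_mult holomorphic_on_const hol)
    moreover have "Re (zeta w) * Re (cinner x x) \<le> Re (q w) \<and> Re (q w) \<le> 0" if "w \<in> ball 0 1" for w
      using Re_quadratic_form_bounds[of "F w" "Re (zeta w)" x] bd[OF that] by (simp add: q_def)
    ultimately obtain a b :: real where ab: "\<forall>w\<in>ball 0 1. q w = \<i> * of_real a + of_real b * zeta w"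
      using affine_in_zeta_if_Re_bounded by blast
    then have "q 0 = \<i> * of_real a - of_real b"
      by simp
    then have "cinner x (op_im (F 0) *v x) = of_real a" "cinner x ((- op_re (F 0)) *v x) = of_real b"
      by (simp_all add: q_def cinner_op_im cinner_op_re matrix_vector_mult_uminus_left cinner_minus_right)
    then show "cinner x ((F z - (mat \<i> ** op_im (F 0) + mat (zeta z) ** (- op_re (F 0)))) *v x) = 0"
      using ab z
      by (simp add: q_def matrix_vector_mult_diff_rdistrib matrix_vector_mult_add_rdistrib
          cinner_diff_right cinner_add_right matrix_vector_mul_assoc[symmetric]
          mat_matrix_vector_mult cinner_scale_right)
  qed
  then show ?thesis
    by simp
qed

lemma op_im_op_re_of_self_adjoint:
  fixes A B :: "complex^'n^'n"
  assumes "self_adjoint A" "self_adjoint B"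
  shows "op_im (mat \<i> ** A + mat (-1) ** B) = A" "- op_re (mat \<i> ** A + mat (-1) ** B) = B"
proof -
  have "cnj (A$j$i) = A$i$j" "cnj (B$j$i) = B$i$j" for i j
    using assms unfolding self_adjoint_def cadj_def by (metis vec_lambda_beta)+
  then show "op_im (mat \<i> ** A + mat (-1) ** B) = A" "- op_re (mat \<i> ** A + mat (-1) ** B) = B"
    by (simp_all add: op_im_def op_re_def mat_matrix_mult vec_eq_iff field_simps)
qed

theorem lemma4p8:
  fixes \<psi> :: "complex \<Rightarrow> complex^'n^'n"
  assumes "class_C \<psi>"
    and "\<forall>z\<in>ball 0 1. loewner_le (op_re (cayley (\<psi> z))) 0
           \<and> loewner_le (mat (complex_of_real (Re (zeta z)))) (op_re (cayley (\<psi> z)))"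
  shows "(\<exists>!AB. self_adjoint (fst AB) \<and> positive_op (snd AB) \<and> contraction (snd AB) \<and>
            (\<forall>z\<in>ball 0 1. cayley (\<psi> z) = mat \<i> ** fst AB + mat (zeta z) ** snd AB))
    \<and> (let A = op_im (cayley (\<psi> 0)); B = - op_re (cayley (\<psi> 0)) in
         self_adjoint A \<and> positive_op B \<and> contraction B \<and>
         (\<forall>z\<in>ball 0 1. cayley (\<psi> z) = mat \<i> ** A + mat (zeta z) ** B
            \<and> \<psi> z = (mat \<i> ** A + mat (zeta z) ** B + mat 1)
                       ** matrix_inv (mat \<i> ** A + mat (zeta z) ** B - mat 1)))"
proof -
  define A where "A = op_im (cayley (\<psi> 0))"
  define B where "B = - op_re (cayley (\<psi> 0))"
  have inv: "invertible (\<psi> z - mat 1)" if "z \<in> ball 0 1" for z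
    using assms(1) that unfolding class_C_def by (blast intro: invertible_diff_mat_1)
  have affine: "cayley (\<psi> z) = mat \<i> ** A + mat (zeta z) ** B" if "z \<in> ball 0 1" for z
    unfolding A_def B_def using assms inv that
    by (intro affine_in_zeta_if_op_re_bounded holomorphic_on_cayley) (auto simp: class_C_def)
  have "loewner_le (op_re (cayley (\<psi> 0))) 0" "loewner_le (mat (-1)) (op_re (cayley (\<psi> 0)))"
    using bspec[OF assms(2), of 0] by simp_all
  moreover have "mat (-1) = - (mat 1 :: complex^'n^'n)"
    by (simp add: mat_def vec_eq_iff)
  ultimately have B: "positive_op B" "loewner_le B (mat 1)"
    by (simp_all add: B_def loewner_le_def add.commute)
  have "\<psi> z = (mat \<i> ** A + mat (zeta z) ** B + mat 1) ** matrix_inv (mat \<i> ** A + mat (zeta z) ** B - mat 1)"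
    if "z \<in> ball 0 1" for z
    using cayley_cayley[OF inv[OF that]] by (simp add: affine[OF that] flip: cayley_def)
  moreover have "AB = (A, B)"
    if "self_adjoint (fst AB)" "positive_op (snd AB)"
      "\<forall>z\<in>ball 0 1. cayley (\<psi> z) = mat \<i> ** fst AB + mat (zeta z) ** snd AB" for AB
    using that op_im_op_re_of_self_adjoint[of "fst AB" "snd AB"]
    by (auto simp: A_def B_def positive_op_def prod_eq_iff)
  ultimately show ?thesis
    using self_adjoint_op_im[of "cayley (\<psi> 0)"] B contraction_if_positive_op_loewner_le_1 affine
    unfolding Let_def A_def[symmetric] B_def[symmetric] by (intro conjI ex1I[of _ "(A, B)"]) auto
qed

end
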